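(* Let $c_1\in(0,0.01)$ be a sufficiently small absolute constant and $c_0$ a sufficiently large absolute constant, let $n$ be sufficiently large and $\epsilon\in[c_0/\sqrt n,1)$. Then every function in the support of $\mathcal D_{\mathrm{yes}}$ is $(0.1c_1\epsilon)$-close to some monotone function $g:\{0,1\}^n\to\{0,1\}$, i.e. $\Pr_{x}[f(x)\ne g(x)]\le 0.1c_1\epsilon$.
   Context: Parameters: $a=\sqrt n/\epsilon$ and $m=n-a$ (assumed integers), $L=0.1\cdot 2^{\sqrt m/\epsilon}$. For $x\in\{0,1\}^n$ and $B\subseteq[n]$, $x_B\in\{0,1\}^B$ is the restriction of $x$ to $B$; $|z|$ is Hamming weight. For a set $A$ of size $a$, define on $\{0,1\}^A$: $h^{(+,0)}\equiv 0$; $h^{(+,1)}(z)=1$ if $|z|>a/2+c_1\sqrt a$ or $|z|<a/2-c_1\sqrt a$, and $0$ otherwise; $h^{(-,0)}(z)=1$ iff $|z|>a/2+c_1\sqrt a$; $h^{(-,1)}(z)=1$ iff $|z|<a/2-c_1\sqrt a$. $\mathsf{Talagrand}(m,\epsilon)$ on a coordinate set $C$ of size $m$: draw $L$ independent sets $\mathbf T_1,\dots,\mathbf T_L\subseteq C$, each formed by $\sqrt m/\epsilon$ independent uniform draws from $C$ with replacement; for $y\in\{0,1\}^C$, $S_T(y)=\{\ell: y_j=1\ \forall j\in T_\ell\}$. A draw $\mathbf f_{\mathrm{yes}}\sim\mathcal D_{\mathrm{yes}}$: choose $\mathbf A\subseteq[n]$ uniformly among sets of size $a$, put $\mathbf C=[n]\setminus\mathbf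 A$, draw $\mathbf T\sim\mathsf{Talagrand}(m,\epsilon)$ on $\mathbf C$, and uniform $\mathbf b\in\{0,1\}^L$; then $\mathbf f_{\mathrm{yes}}(x)=1$ if $|S_{\mathbf T}(x_{\mathbf C})|>1$ or $|x_{\mathbf C}|>m/2+0.05\epsilon\sqrt m$; otherwise $\mathbf f_{\mathrm{yes}}(x)=0$ if $|S_{\mathbf T}(x_{\mathbf C})|=0$ or $|x_{\mathbf C}|<m/2$; otherwise $S_{\mathbf T}(x_{\mathbf C})=\{\ell\}$ and $|x_{\mathbf C}|\in[m/2,m/2+0.05\epsilon\sqrt m]$, and $\mathbf f_{\mathrm{yes}}(x)=h^{(+,\mathbf b_\ell)}(x_{\mathbf A})$. A function is monotone if $f(x)\le f(y)$ whenever $x\le y$ coordinatewise. *)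

theory Defs
  imports Complex_Main
begin

text \<open>Points x of {0,1}^n are encoded as the set of coordinates equal to 1,
  i.e. subsets of {..<n}. The restriction x_B is x \<inter> B, and the Hamming
  weight |x_B| is card (x \<inter> B).\<close>

definition cube :: "nat \<Rightarrow> nat set set" where
  "cube n = Pow {..<n}"

definition monotone_on_cube :: "nat \<Rightarrow> (nat set \<Rightarrow> bool) \<Rightarrow> bool" where
  "monotone_on_cube n g \<longleftrightarrow> (\<forall>x y. x \<subseteq> y \<and> y \<subseteq> {..<n} \<and> g x \<longrightarrow> g y)"

definition dist_cube :: "nat \<Rightarrow> (nat set \<Rightarrow> bool) \<Rightarrow> (nat set \<Rightarrow> bool) \<Rightarrow> real" where
  "dist_cube n f g = real (card {x \<in> cube n. f x \<noteq> g x}) / 2 ^ n"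

text \<open>The functions h on {0,1}^A (z = x_A, a = |A|).\<close>
definition h_plus :: "real \<Rightarrow> nat \<Rightarrow> bool \<Rightarrow> nat set \<Rightarrow> bool" where
  "h_plus c1 a b z = (if b then
      (real (card z) > real a / 2 + c1 * sqrt (real a) \<or>
       real (card z) < real a / 2 - c1 * sqrt (real a))
    else False)"

definition h_minus :: "real \<Rightarrow> nat \<Rightarrow> bool \<Rightarrow> nat set \<Rightarrow> bool" where
  "h_minus c1 a b z = (if b then real (card z) < real a / 2 - c1 * sqrt (real a)
    else real (card z) > real a / 2 + c1 * sqrt (real a))"

text \<open>Number of draws per Talagrand term and number of terms (rounded down).\<close>
definition tal_k :: "nat \<Rightarrow> real \<Rightarrow> nat" where
  "tal_k m eps = nat \<lfloor>sqrt (real m) / eps\<rfloor>"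

definition tal_L :: "nat \<Rightarrow> real \<Rightarrow> nat" where
  "tal_L m eps = nat \<lfloor>0.1 * 2 powr (sqrt (real m) / eps)\<rfloor>"

definition S_T :: "nat \<Rightarrow> (nat \<Rightarrow> nat set) \<Rightarrow> nat set \<Rightarrow> nat set" where
  "S_T L T y = {l \<in> {..<L}. T l \<subseteq> y}"

definition f_yes :: "nat \<Rightarrow> real \<Rightarrow> real \<Rightarrow> nat set \<Rightarrow> (nat \<Rightarrow> nat set) \<Rightarrow> (nat \<Rightarrow> bool)
    \<Rightarrow> nat set \<Rightarrow> bool" where
  "f_yes n eps c1 A T b x =
    (let C = {..<n} - A; m = card C; a = card A; L = tal_L m eps;
         S = S_T L T (x \<inter> C); w = real (card (x \<inter> C)) in
     if card S > 1 \<or> w > real m / 2 + 0.05 * eps * sqrt (real m) then True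
     else if card S = 0 \<or> w < real m / 2 then False
     else h_plus c1 a (b (THE l. S = {l})) (x \<inter> A))"

definition yes_support :: "nat \<Rightarrow> real \<Rightarrow> real \<Rightarrow> (nat set \<Rightarrow> bool) set" where
  "yes_support n eps c1 =
    {f. \<exists>A T b. A \<subseteq> {..<n} \<and> real (card A) = sqrt (real n) / eps \<and>
        (\<forall>l < tal_L (n - card A) eps. \<exists>s :: nat \<Rightarrow> nat.
            (\<forall>i < tal_k (n - card A) eps. s i \<in> {..<n} - A) \<and>
            T l = s ` {..<tal_k (n - card A) eps}) \<and>
        f = f_yes n eps c1 A T b}"

end

theory Submission
  imports Defs
begin

(* Replacing h^(+,b_l)(x_A) in f_yes by the bit b_l itself gives a monotone function: as x grows,
   S_T(x_C) and |x_C| only grow, so a point with a single satisfied term l in the weight band either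
   keeps that term or is pushed to the constant-1 region. The two functions can disagree only when
   |x_A| is within c1 sqrt a of a/2 and |x_C| lies in [m/2, m/2 + 0.05 eps sqrt m]. Since every
   binomial coefficient (a choose j) is at most 0.82 2^a / sqrt a, these windows have density
   O(c1 + 1/sqrt a) and O(eps + 1/sqrt m), and their product is below 0.1 c1 eps as soon as
   sqrt a >= 100/c1 and sqrt m >= 100/eps, which the parameter ranges guarantee. *)

lemma central_binomial_Suc:
  "Suc k * (2 * Suc k choose Suc k) = 2 * (2 * k + 1) * (2 * k choose k)"
proof -
  have up: "Suc k * (2 * Suc k choose Suc k) = 2 * Suc k * (2 * k + 1 choose k)"
    using Suc_times_binomial[where n = "2 * k + 1" and k = k] by simp
  have down: "(2 * k + 1 choose k) * Suc k = (2 * k + 1) * (2 * k choose k)"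
    using Suc_times_binomial_eq[where n = "2 * k" and k = k] central_binomial_odd[of "2 * k + 1"]
    by simp
  have "Suc k * (Suc k * (2 * Suc k choose Suc k)) = 2 * Suc k * ((2 * k + 1 choose k) * Suc k)"
    unfolding up by (simp only: mult_ac)
  also have "\<dots> = Suc k * (2 * (2 * k + 1) * (2 * k choose k))"
    unfolding down by (simp only: mult_ac)
  finally show ?thesis by (simp only: mult_left_cancel nat.distinct(1) simp_thms)
qed

lemma central_binomial_sq_le: "(2 * k choose k)\<^sup>2 * (3 * k + 1) \<le> 16 ^ k"
proof (induction k)
  case 0
  then show ?case by simp
next
  case (Suc k)
  define c where "c = 2 * k choose k"
  define c' where "c' = 2 * Suc k choose Suc k"
  have rec: "Suc k * c' = 2 * (2 * k + 1) * c"
    unfolding c_def c'_def by (rule central_binomial_Suc)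
  have "(Suc k)\<^sup>2 * (c'\<^sup>2 * (3 * k + 4)) = (2 * (2 * k + 1) * c)\<^sup>2 * (3 * k + 4)"
    by (metis rec mult.assoc power_mult_distrib)
  also have "\<dots> = (4 * (2 * k + 1)\<^sup>2 * (3 * k + 4)) * c\<^sup>2"
    by (simp only: power_mult_distrib mult_ac) simp
  also have "\<dots> \<le> (16 * (Suc k)\<^sup>2 * (3 * k + 1)) * c\<^sup>2"
    by (intro mult_right_mono) (simp_all add: power2_eq_square algebra_simps)
  also have "\<dots> \<le> 16 * (Suc k)\<^sup>2 * 16 ^ k"
    using mult_left_mono[OF Suc.IH, of "16 * (Suc k)\<^sup>2"] unfolding c_def by (simp only: mult_ac)
  finally have "(Suc k)\<^sup>2 * (c'\<^sup>2 * (3 * k + 4)) \<le> (Suc k)\<^sup>2 * 16 ^ Suc k"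
    by (simp add: algebra_simps)
  then have "c'\<^sup>2 * (3 * k + 4) \<le> 16 ^ Suc k"
    by (simp only: mult_le_cancel1) simp
  moreover have "3 * Suc k + 1 = 3 * k + 4" by simp
  ultimately show ?case unfolding c'_def by (simp only:)
qed

lemma binomial_sq_le: "(a choose j)\<^sup>2 * (3 * a + 2) \<le> 2 * 4 ^ a"
proof -
  have "(a choose (a div 2))\<^sup>2 * (3 * a + 2) \<le> 2 * 4 ^ a"
  proof (cases "even a")
    case True
    then obtain k where a: "a = 2 * k" by blast
    have "2 * ((2 * k choose k)\<^sup>2 * (3 * k + 1)) \<le> 2 * 16 ^ k"
      using central_binomial_sq_le[of k] by simp
    moreover have "(4::nat) ^ (2 * k) = 16 ^ k" by (simp add: power_mult)
    ultimately show ?thesis using a by (simp add: algebra_simps)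
  next
    case False
    then obtain k where a: "a = 2 * k + 1" using oddE by blast
    define c where "c = 2 * k + 1 choose k"
    have "2 * Suc k choose Suc k = 2 * c"
      using binomial_Suc_Suc[of "2 * k + 1" k] central_binomial_odd[of "2 * k + 1"]
      unfolding c_def by (simp add: algebra_simps)
    then have "4 * (c\<^sup>2 * (3 * k + 4)) \<le> 4 * (4 * 16 ^ k)"
      using central_binomial_sq_le[of "Suc k"] by (simp add: power_mult_distrib algebra_simps)
    then have "c\<^sup>2 * (3 * k + 4) \<le> 4 * 16 ^ k" by linarith
    moreover have "c\<^sup>2 * (6 * k + 5) \<le> 2 * (c\<^sup>2 * (3 * k + 4))" by simp
    ultimately have "c\<^sup>2 * (6 * k + 5) \<le> 8 * 16 ^ k" by linarith
    moreover have "(4::nat) ^ (2 * k + 1) = 4 * 16 ^ k" by (simp add: power_mult)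
    moreover have "a div 2 = k" using a by simp
    ultimately show ?thesis using a unfolding c_def by (simp add: algebra_simps)
  qed
  moreover have "(a choose j)\<^sup>2 \<le> (a choose (a div 2))\<^sup>2"
    by (rule power_mono[OF binomial_maximum]) simp
  ultimately show ?thesis using mult_right_mono le_trans by blast
qed

lemma binomial_le_pow2_div_sqrt:
  assumes "a > 0"
  shows "real (a choose j) \<le> 41 / 50 * 2 ^ a / sqrt (real a)"
proof -
  define c where "c = real (a choose j)"
  have "c\<^sup>2 * (3 * real a + 2) \<le> 2 * 4 ^ a"
    using of_nat_mono[OF binomial_sq_le[of a j], where 'a = real] unfolding c_def
    by (simp add: algebra_simps)
  then have "3 * (c * sqrt (real a))\<^sup>2 \<le> 2 * 4 ^ a"
    by (simp add: power_mult_distrib algebra_simps) (smt (verit) zero_le_power2)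
  moreover have "(41 / 50 * 2 ^ a)\<^sup>2 = 1681 / 2500 * (4::real) ^ a"
    by (simp add: power2_eq_square power_mult_distrib[symmetric])
  ultimately have "(c * sqrt (real a))\<^sup>2 \<le> (41 / 50 * 2 ^ a)\<^sup>2"
    using zero_le_power[of "4::real" a] by linarith
  then have "c * sqrt (real a) \<le> 41 / 50 * 2 ^ a"
    by (rule power2_le_imp_le) simp
  then show ?thesis unfolding c_def using assms by (simp add: field_simps)
qed

lemma card_le_real_interval_width:
  assumes "finite J" and "\<forall>j\<in>J. lo \<le> real j \<and> real j \<le> hi" and "lo \<le> hi"
  shows "real (card J) \<le> hi - lo + 1"
proof (cases "J = {}")
  case True
  then show ?thesis using assms by simp
next
  case False
  have "card J \<le> card {Min J..Max J}"
    by (rule card_mono) (use assms in auto)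
  then have "real (card J) \<le> real (Max J) + 1 - real (Min J)"
    using Min_le[OF assms(1) Max_in[OF assms(1) False]] by simp
  moreover have "real (Max J) \<le> hi" "lo \<le> real (Min J)"
    using assms False by auto
  ultimately show ?thesis by linarith
qed

lemma card_subsets_card_in:
  assumes "finite A"
  shows "card {u. u \<subseteq> A \<and> P (card u)} = (\<Sum>j | j \<le> card A \<and> P j. card A choose j)"
proof -
  let ?J = "{j. j \<le> card A \<and> P j}"
  have "{u. u \<subseteq> A \<and> P (card u)} = (\<Union>j\<in>?J. {u. u \<subseteq> A \<and> card u = j})"
    using assms by (auto intro: card_mono)
  also have "card \<dots> = (\<Sum>j\<in>?J. card {u. u \<subseteq> A \<and> card u = j})"
    by (rule card_UN_disjoint) (use assms in auto)
  also have "\<dots> = (\<Sum>j\<in>?J. card A choose j)"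
    using assms by (simp add: n_subsets)
  finally show ?thesis .
qed

lemma card_subsets_window_le:
  assumes "finite A" and "card A > 0" and "0 \<le> w"
  shows "real (card {u. u \<subseteq> A \<and> lo \<le> real (card u) \<and> real (card u) \<le> lo + w}) / 2 ^ card A
    \<le> 41 / 50 * (w + 1) / sqrt (card A)"
proof -
  define J where "J = {j. j \<le> card A \<and> lo \<le> real j \<and> real j \<le> lo + w}"
  have "real (card {u. u \<subseteq> A \<and> lo \<le> real (card u) \<and> real (card u) \<le> lo + w})
      = (\<Sum>j\<in>J. real (card A choose j))"
    using card_subsets_card_in[OF assms(1), of "\<lambda>k. lo \<le> real k \<and> real k \<le> lo + w"]
    unfolding J_def by simp
  also have "\<dots> \<le> real (card J) * (41 / 50 * 2 ^ card A / sqrt (card A))"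
    by (rule sum_bounded_above) (rule binomial_le_pow2_div_sqrt[OF assms(2)])
  also have "\<dots> \<le> (w + 1) * (41 / 50 * 2 ^ card A / sqrt (card A))"
  proof (rule mult_right_mono)
    have "real (card J) \<le> (lo + w) - lo + 1"
    proof (rule card_le_real_interval_width)
      show "finite J" unfolding J_def by simp
    qed (use assms(3) in \<open>simp_all add: J_def\<close>)
    then show "real (card J) \<le> w + 1" by simp
  qed simp
  also have "\<dots> = 41 / 50 * (w + 1) / sqrt (card A) * 2 ^ card A"
    by simp
  finally show ?thesis
    by (simp add: pos_divide_le_eq)
qed

lemma card_subsets_split:
  assumes "A \<subseteq> U"
  shows "card {x. x \<subseteq> U \<and> P (x \<inter> A) \<and> Q (x \<inter> (U - A))}
       = card {u. u \<subseteq> A \<and> P u} * card {v. v \<subseteq> U - A \<and> Q v}"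
proof -
  let ?X = "{x. x \<subseteq> U \<and> P (x \<inter> A) \<and> Q (x \<inter> (U - A))}"
  let ?split = "\<lambda>x. (x \<inter> A, x \<inter> (U - A))"
  have "inj_on ?split ?X"
    by (rule inj_onI) (use assms in blast)
  moreover have "?split ` ?X = {u. u \<subseteq> A \<and> P u} \<times> {v. v \<subseteq> U - A \<and> Q v}"
  proof (intro equalityI subsetI)
    fix p assume "p \<in> {u. u \<subseteq> A \<and> P u} \<times> {v. v \<subseteq> U - A \<and> Q v}"
    then obtain u v where "p = (u, v)" "u \<subseteq> A" "P u" "v \<subseteq> U - A" "Q v" by auto
    moreover have "(u \<union> v) \<inter> A = u" "(u \<union> v) \<inter> (U - A) = v"
      using calculation by auto
    ultimately show "p \<in> ?split ` ?X"
      using assms by (intro image_eqI[of _ _ "u \<union> v"]) auto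
  qed auto
  ultimately show ?thesis
    by (simp add: card_image[symmetric] card_cartesian_product)
qed

definition f_yes_mono :: "nat \<Rightarrow> real \<Rightarrow> nat set \<Rightarrow> (nat \<Rightarrow> nat set) \<Rightarrow> (nat \<Rightarrow> bool)
    \<Rightarrow> nat set \<Rightarrow> bool" where
  "f_yes_mono n eps A T b x =
    (let C = {..<n} - A; m = card C; L = tal_L m eps;
         S = S_T L T (x \<inter> C); w = real (card (x \<inter> C)) in
     if card S > 1 \<or> w > real m / 2 + 0.05 * eps * sqrt (real m) then True
     else if card S = 0 \<or> w < real m / 2 then False
     else b (THE l. S = {l}))"

lemma S_T_mono: "x \<subseteq> y \<Longrightarrow> S_T L T x \<subseteq> S_T L T y"
  unfolding S_T_def by auto

lemma monotone_f_yes_mono: "monotone_on_cube n (f_yes_mono n eps A T b)"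
  unfolding monotone_on_cube_def
proof (intro allI impI, elim conjE)
  fix x y assume "x \<subseteq> y" and "f_yes_mono n eps A T b x"
  define C where "C = {..<n} - A"
  define m where "m = card C"
  define Sx where "Sx = S_T (tal_L m eps) T (x \<inter> C)"
  define Sy where "Sy = S_T (tal_L m eps) T (y \<inter> C)"
  define th where "th = real m / 2 + 0.05 * eps * sqrt (real m)"
  have fin: "finite Sy" unfolding Sy_def S_T_def by simp
  have sub: "Sx \<subseteq> Sy" unfolding Sx_def Sy_def using \<open>x \<subseteq> y\<close> by (intro S_T_mono) blast
  have weight: "card (x \<inter> C) \<le> card (y \<inter> C)"
    using \<open>x \<subseteq> y\<close> by (intro card_mono) (auto simp: C_def)
  have gx: "card Sx > 1 \<or> real (card (x \<inter> C)) > th \<or>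
     (card Sx = 1 \<and> real (card (x \<inter> C)) \<ge> real m / 2 \<and> b (THE l. Sx = {l}))"
    using \<open>f_yes_mono n eps A T b x\<close>
    unfolding f_yes_mono_def Let_def C_def[symmetric] m_def[symmetric] Sx_def[symmetric]
      th_def[symmetric]
    by (auto split: if_splits)
  have "card Sy > 1 \<or> real (card (y \<inter> C)) > th \<or>
     (card Sy = 1 \<and> real (card (y \<inter> C)) \<ge> real m / 2 \<and> b (THE l. Sy = {l}))"
  proof (cases "card Sy > 1 \<or> real (card (y \<inter> C)) > th")
    case False
    then have "card Sx = 1 \<and> real (card (x \<inter> C)) \<ge> real m / 2 \<and> b (THE l. Sx = {l})"
      using gx card_mono[OF fin sub] weight by auto
    moreover have "card Sy = 1"
      using False calculation card_mono[OF fin sub] by simp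
    ultimately show ?thesis
      using card_seteq[OF fin sub] weight by simp
  qed blast
  then show "f_yes_mono n eps A T b y"
    unfolding f_yes_mono_def Let_def C_def[symmetric] m_def[symmetric] Sy_def[symmetric]
      th_def[symmetric]
    by auto
qed

lemma f_yes_neq_f_yes_mono_imp_bands:
  assumes "f_yes n eps c1 A T b x \<noteq> f_yes_mono n eps A T b x"
  defines "C \<equiv> {..<n} - A"
  shows "real (card A) / 2 - c1 * sqrt (card A) \<le> real (card (x \<inter> A)) \<and>
         real (card (x \<inter> A)) \<le> real (card A) / 2 + c1 * sqrt (card A) \<and>
         real (card C) / 2 \<le> real (card (x \<inter> C)) \<and>
         real (card (x \<inter> C)) \<le> real (card C) / 2 + 0.05 * eps * sqrt (card C)"
  using assms unfolding f_yes_def f_yes_mono_def Let_def h_plus_def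
  by (auto split: if_splits)

lemma dist_f_yes_f_yes_mono_le:
  assumes A: "A \<subseteq> {..<n}" and a_pos: "card A > 0" and m_pos: "card ({..<n} - A) > 0"
    and "0 \<le> c1" and "0 \<le> eps"
  shows "dist_cube n (f_yes n eps c1 A T b) (f_yes_mono n eps A T b)
    \<le> 41 / 50 * (2 * c1 + 1 / sqrt (card A))
        * (41 / 50 * (0.05 * eps + 1 / sqrt (card ({..<n} - A))))"
proof -
  define C where "C = {..<n} - A"
  define a where "a = card A"
  define m where "m = card C"
  define U where "U = {u. u \<subseteq> A \<and> real a / 2 - c1 * sqrt a \<le> real (card u) \<and>
    real (card u) \<le> real a / 2 - c1 * sqrt a + 2 * c1 * sqrt a}"
  define V where "V = {v. v \<subseteq> C \<and> real m / 2 \<le> real (card v) \<and>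
    real (card v) \<le> real m / 2 + 0.05 * eps * sqrt m}"
  let ?D = "{x \<in> cube n. f_yes n eps c1 A T b x \<noteq> f_yes_mono n eps A T b x}"
  let ?B = "{x. x \<subseteq> {..<n} \<and> x \<inter> A \<in> U \<and> x \<inter> C \<in> V}"
  have "finite ?B" by (rule finite_subset[of _ "Pow {..<n}"]) auto
  moreover have "?D \<subseteq> ?B"
    using f_yes_neq_f_yes_mono_imp_bands[of n eps c1 A T b]
    unfolding U_def V_def C_def a_def m_def cube_def by force
  ultimately have "card ?D \<le> card ?B" by (rule card_mono)
  also have "card ?B = card U * card V"
  proof -
    have "{u. u \<subseteq> A \<and> u \<in> U} = U" "{v. v \<subseteq> C \<and> v \<in> V} = V"
      unfolding U_def V_def by auto
    then show ?thesis
      using card_subsets_split[OF A, of "\<lambda>u. u \<in> U" "\<lambda>v. v \<in> V"] unfolding C_def by simp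
  qed
  finally have "card ?D \<le> card U * card V" .
  moreover have "n = a + m"
    using A card_Diff_subset[of A "{..<n}"] card_mono[OF _ A]
    unfolding a_def m_def C_def by (simp add: finite_subset)
  ultimately have "dist_cube n (f_yes n eps c1 A T b) (f_yes_mono n eps A T b)
      \<le> (real (card U) / 2 ^ a) * (real (card V) / 2 ^ m)"
    unfolding dist_cube_def by (simp add: power_add divide_right_mono flip: of_nat_mult)
  also have "\<dots> \<le> (41 / 50 * (2 * c1 * sqrt a + 1) / sqrt a)
      * (41 / 50 * (0.05 * eps * sqrt m + 1) / sqrt m)"
  proof (rule mult_mono)
    show "real (card U) / 2 ^ a \<le> 41 / 50 * (2 * c1 * sqrt a + 1) / sqrt a"
      unfolding U_def a_def
      by (rule card_subsets_window_le) (use A a_pos assms(4) finite_subset in auto)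
    show "real (card V) / 2 ^ m \<le> 41 / 50 * (0.05 * eps * sqrt m + 1) / sqrt m"
      unfolding V_def m_def C_def
      by (rule card_subsets_window_le) (use m_pos assms(5) in auto)
  qed (use assms(4) in simp_all)
  also have "\<dots> = 41 / 50 * (2 * c1 + 1 / sqrt a) * (41 / 50 * (0.05 * eps + 1 / sqrt m))"
  proof -
    have "sqrt a > 0" "sqrt m > 0" using a_pos m_pos unfolding a_def m_def C_def by simp_all
    then show ?thesis by (simp add: field_simps)
  qed
  finally show ?thesis unfolding a_def m_def C_def .
qed

lemma f_yes_close_to_monotone:
  assumes A: "A \<subseteq> {..<n}" and c1: "0 < c1" and eps: "0 < eps"
    and a: "100 / c1 \<le> sqrt (card A)" and m: "100 / eps \<le> sqrt (card ({..<n} - A))"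
  shows "\<exists>g. monotone_on_cube n g \<and> dist_cube n (f_yes n eps c1 A T b) g \<le> 0.1 * c1 * eps"
proof (intro exI conjI)
  define s where "s = sqrt (card A)"
  define t where "t = sqrt (card ({..<n} - A))"
  have "s > 0" "t > 0"
    using a m c1 eps unfolding s_def t_def by (smt (verit) divide_pos_pos)+
  have "1 / s \<le> c1 / 100" "1 / t \<le> eps / 100"
    using a m c1 eps \<open>s > 0\<close> \<open>t > 0\<close> unfolding s_def[symmetric] t_def[symmetric]
    by (simp_all add: field_simps)
  then have "41 / 50 * (2 * c1 + 1 / s) \<le> 41 / 50 * (201 / 100) * c1"
    and "41 / 50 * (0.05 * eps + 1 / t) \<le> 41 / 50 * (6 / 100) * eps"
    by simp_all
  then have "41 / 50 * (2 * c1 + 1 / s) * (41 / 50 * (0.05 * eps + 1 / t))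
      \<le> (41 / 50 * (201 / 100) * c1) * (41 / 50 * (6 / 100) * eps)"
    by (rule mult_mono) (use c1 eps \<open>t > 0\<close> in simp_all)
  also have "\<dots> \<le> 0.1 * c1 * eps"
    using c1 eps by simp
  finally show "dist_cube n (f_yes n eps c1 A T b) (f_yes_mono n eps A T b) \<le> 0.1 * c1 * eps"
    using dist_f_yes_f_yes_mono_le[OF A _ _ less_imp_le[OF c1] less_imp_le[OF eps], of T b]
      \<open>s > 0\<close> \<open>t > 0\<close> unfolding s_def t_def by simp
qed (rule monotone_f_yes_mono)

lemma yes_sizes_large:
  assumes c1: "0 < c1" and n: "10 ^ 8 / c1 ^ 4 \<le> real n"
    and eps: "200 / sqrt n \<le> eps" "eps < 1" and a: "real a = sqrt n / eps"
  shows "0 < eps" and "100 / c1 \<le> sqrt a" and "a \<le> n" and "100 / eps \<le> sqrt (real (n - a))"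
proof -
  define r where "r = sqrt n"
  have "0 < 10 ^ 8 / c1 ^ 4" using c1 by simp
  then have "real n > 0" using n by linarith
  then have "r > 0" unfolding r_def by simp
  have "r\<^sup>2 = n" unfolding r_def by simp
  show "eps > 0" using eps(1) \<open>r > 0\<close> unfolding r_def[symmetric]
    by (smt (verit) divide_pos_pos)
  have "(10 ^ 4 / c1\<^sup>2)\<^sup>2 = (10 ^ 8 / c1 ^ 4 :: real)"
    by (simp add: power_divide flip: power_mult)
  then have "(10 ^ 4 / c1\<^sup>2)\<^sup>2 \<le> r\<^sup>2"
    using n \<open>r\<^sup>2 = n\<close> by simp
  then have "10 ^ 4 / c1\<^sup>2 \<le> r"
    by (rule power2_le_imp_le) (use \<open>r > 0\<close> in simp)
  moreover have "r = eps * real a"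
    using a \<open>eps > 0\<close> unfolding r_def[symmetric] by simp
  then have "r \<le> real a"
    using eps(2) \<open>eps > 0\<close> by (simp add: mult_left_le_one_le)
  ultimately have "(100 / c1)\<^sup>2 \<le> real a" by (simp add: power_divide)
  then show "100 / c1 \<le> sqrt a" by (rule real_le_rsqrt)
  have inv_eps: "1 / eps \<le> r / 200"
    using eps(1) \<open>eps > 0\<close> \<open>r > 0\<close> unfolding r_def[symmetric] by (simp add: field_simps)
  have "real a = r * (1 / eps)"
    using a unfolding r_def by simp
  also have "\<dots> \<le> r * (r / 200)"
    by (rule mult_left_mono[OF inv_eps]) (use \<open>r > 0\<close> in simp)
  finally have "real a \<le> n / 200"
    using \<open>r\<^sup>2 = n\<close> by (simp add: power2_eq_square)
  have "(1 / eps)\<^sup>2 \<le> (r / 200)\<^sup>2"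
    by (rule power_mono[OF inv_eps]) (use \<open>eps > 0\<close> in simp)
  then have "(100 / eps)\<^sup>2 \<le> n / 4"
    using \<open>r\<^sup>2 = n\<close> by (simp add: power_divide)
  have "real a \<le> real n"
    using \<open>real a \<le> n / 200\<close> \<open>real n > 0\<close> by linarith
  then show "a \<le> n" by simp
  then have "(100 / eps)\<^sup>2 \<le> real (n - a)"
    using \<open>(100 / eps)\<^sup>2 \<le> n / 4\<close> \<open>real a \<le> n / 200\<close> by (simp add: of_nat_diff)
  then show "100 / eps \<le> sqrt (real (n - a))" by (rule real_le_rsqrt)
qed

lemma yes_support_close_to_monotone:
  assumes c1: "0 < c1" and c0: "200 \<le> c0" and n: "10 ^ 8 / c1 ^ 4 \<le> real n"
    and eps: "c0 / sqrt n \<le> eps" "eps < 1" and f: "f \<in> yes_support n eps c1"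
  shows "\<exists>g. monotone_on_cube n g \<and> dist_cube n f g \<le> 0.1 * c1 * eps"
proof -
  obtain A T b where A: "A \<subseteq> {..<n}" and a: "real (card A) = sqrt n / eps"
    and f_eq: "f = f_yes n eps c1 A T b"
    using f unfolding yes_support_def by blast
  have "200 / sqrt n \<le> c0 / sqrt n"
    by (rule divide_right_mono[OF c0]) simp
  then have "200 / sqrt n \<le> eps" using eps(1) by linarith
  note sizes = yes_sizes_large[OF c1 n this eps(2) a]
  have "card ({..<n} - A) = n - card A"
    using A by (simp add: card_Diff_subset finite_subset)
  then show ?thesis
    unfolding f_eq using f_yes_close_to_monotone[OF A c1 sizes(1,2)] sizes(4) by simp
qed

theorem mainTheorem5:
  shows "\<exists>c1bar > 0. c1bar \<le> 0.01 \<and>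
    (\<forall>c1. 0 < c1 \<and> c1 < c1bar \<longrightarrow>
      (\<exists>C0. \<forall>c0 \<ge> C0. \<exists>N :: nat. \<forall>n \<ge> N. \<forall>eps :: real.
         c0 / sqrt (real n) \<le> eps \<and> eps < 1 \<and>
         (\<exists>a :: nat. real a = sqrt (real n) / eps) \<longrightarrow>
         (\<forall>f \<in> yes_support n eps c1.
            \<exists>g. monotone_on_cube n g \<and> dist_cube n f g \<le> 0.1 * c1 * eps)))"
proof (rule exI[of _ "0.01 :: real"], intro conjI allI impI exI[of _ "200 :: real"], goal_cases)
  case (3 c1 c0)
  have "\<forall>n \<ge> nat \<lceil>10 ^ 8 / c1 ^ 4\<rceil>. 10 ^ 8 / c1 ^ 4 \<le> real n"
    by linarith
  with 3 show ?case
    by (intro exI[of _ "nat \<lceil>10 ^ 8 / c1 ^ 4\<rceil>"] allI impI ballI yes_support_close_to_monotone) auto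
qed simp_all

end
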